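(* Assume $F$ is coercive over the set $\{(\mathbf{W},\mathbf{z},\mathbf{a},\mathbf{b}) : h_l(z_l)-\epsilon\le a_l\le h_l(z_l)+\epsilon,\ l=1,\dots,L-1\}$. For the TIAM iterates described in the context, let $M>0$ be a Lipschitz constant of $\nabla\phi$ (gradient with respect to $(a,W,z,b)$) on a bounded set containing all iterates and their extrapolations, and set $C_1=\max(M,M+\theta_1^{k+1},\dots,M+\theta_L^{k+1})$. Then for every $k\in\mathbb{N}$ there exists $g_1^{k+1}\in\partial_{\mathbf{W}^{k+1}}F$ such that $\|g_1^{k+1}\|\le C_1\big(\|\mathbf{W}^{k+1}-\mathbf{W}^k\|+\|\mathbf{z}^{k+1}-\mathbf{z}^k\|+\|\mathbf{a}^{k+1}-\mathbf{a}^k\|+\|\mathbf{b}^{k+1}-\mathbf{b}^k\|+\|\mathbf{W}^k-\mathbf{W}^{k-1}\|+\|\mathbf{b}^k-\mathbf{b}^{k-1}\|+\|\mathbf{z}^k-\mathbf{z}^{k-1}\|\big)$, where $\partial_{\mathbf{W}^{k+1}}F$ denotes the limiting subdifferential of $F$ with respect to $\mathbf{W}$ at $(\mathbf{W}^{k+1},\mathbf{z}^{k+1},\mathbf{a}^{k+1},\mathbf{b}^{k+1})$.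
   Context: Problem. Fix $L\ge 1$, dimensions $n_0=d,n_1,\dots,n_L$, an input $a_0=x\in\mathbb{R}^d$, a label vector $y$, and parameters $\rho>0$, $\epsilon>0$, $p_1,p_2,p_3\in[0,1)$. Variables: $\mathbf{W}=(W_l)_{l=1}^L$, $W_l\in\mathbb{R}^{n_l\times n_{l-1}}$; $\mathbf{b}=(b_l)_{l=1}^L$, $\mathbf{z}=(z_l)_{l=1}^L$ with $b_l,z_l\in\mathbb{R}^{n_l}$; $\mathbf{a}=(a_l)_{l=1}^{L-1}$, $a_l\in\mathbb{R}^{n_l}$. The activations $h_l$ are continuous (applied componentwise); the loss $z_L\mapsto R(z_L;y)$ and the regularizers $\Omega_l$ are continuous, convex and proper, with $\Omega_l\ge 0$. Norms are Euclidean/Frobenius. Let $\phi(a_{l-1},W_l,z_l,b_l)=\frac{\rho}{2}\|z_l-W_la_{l-1}-b_l\|^2$ and $F(\mathbf{W},\mathbf{z},\mathbf{a},\mathbf{b})=R(z_L;y)+\sum_{l=1}^L\Omega_l(W_l)+\sum_{l=1}^L\phi(a_{l-1},W_l,z_l,b_l)$. The subdifferential $\partial_{\mathbf{W}}F$ is the product $\partial_{W_1}F\times\cdots\times\partial_{W_L}F$. Algorithm (TIAM). Iterates $(\mathbf{W}^k,\mathbf{z}^k,\mathbf{a}^k,\mathbf{b}^k)$, $k=0,1,\dots$. In iteration $k\to k+1$, for $l=1,\dots,L$ in order, the blocks $W_l$, $b_l$, $z_l$ and (if $l<L$) $a_l$ are updated in this order. For a block $u$: $\tilde u^{k+1}=u^k+p_1(u^k-u^{k-1})$,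 $\hat u^{k+1}=u^k+p_2(u^k-u^{k-1})$, and after computing $u^{k+1}$, $\bar u^{k+1}=u^{k+1}+p_3(u^{k+1}-u^k)$. Updates: (W) $W_l^{k+1}\in\arg\min_{W_l}\langle\nabla_{W_l}\phi(\bar a_{l-1}^{k+1},\hat W_l^{k+1},\bar z_l^k,\bar b_l^k),W_l-\tilde W_l^{k+1}\rangle+\frac{\theta_l^{k+1}}{2}\|W_l-\tilde W_l^{k+1}\|^2+\Omega_l(W_l)$, with $\theta_l^{k+1}>0$ chosen by backtracking so that $\phi(\bar a_{l-1}^{k+1},\tilde W_l^{k+1},\bar z_l^k,\bar b_l^k)+\langle\nabla_{W_l}\phi(\bar a_{l-1}^{k+1},\hat W_l^{k+1},\bar z_l^k,\bar b_l^k),W_l^{k+1}-\tilde W_l^{k+1}\rangle+\frac{\theta_l^{k+1}}{2}\|W_l^{k+1}-\tilde W_l^{k+1}\|^2\ge\phi(a_{l-1}^{k+1},W_l^{k+1},z_l^k,b_l^k)$. (b) $b_l^{k+1}=\tilde b_l^{k+1}-\nabla_{b_l}\phi(\bar a_{l-1}^{k+1},\bar W_l^{k+1},\bar z_l^k,\hat b_l^{k+1})/\xi_l^{k+1}$, with $\xi_l^{k+1}>0$ chosen by backtracking so that the analogous linearized model with parameter $\xi_l^{k+1}$ at $b_l^{k+1}$ dominates $\phi(a_{l-1}^{k+1},W_l^{k+1},z_l^k,b_l^{k+1})$. (z) For $l<L$: $z_l^{k+1}\in\arg\min_{z_l}\langle\nabla_{z_l}\phi(\bar a_{l-1}^{k+1},\bar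 W_l^{k+1},\hat z_l^{k+1},\bar b_l^{k+1}),z_l-\tilde z_l^{k+1}\rangle+\frac{\rho}{2}\|z_l-\tilde z_l^{k+1}\|^2$ subject to $h_l(z_l)-\epsilon\le a_l^k\le h_l(z_l)+\epsilon$; for $l=L$ the same objective plus $R(z_L;y)$, unconstrained. (a) $a_l^{k+1}\in\arg\min_{a_l}\langle\nabla_{a_l}\phi(\hat a_l^{k+1},\bar W_{l+1}^k,\bar z_{l+1}^k,\bar b_{l+1}^k),a_l-\tilde a_l^{k+1}\rangle+\frac{\tau_l^{k+1}}{2}\|a_l-\tilde a_l^{k+1}\|^2$ subject to $h_l(\bar z_l^{k+1})-\epsilon\le a_l\le h_l(\bar z_l^{k+1})+\epsilon$, with $\tau_l^{k+1}>0$ chosen by backtracking so that the linearized model at $a_l^{k+1}$ dominates $\phi(a_l^{k+1},W_{l+1}^k,z_{l+1}^k,b_{l+1}^k)$. Safeguard: if after a block update the value of $F$ (blocks already updated in this iteration at new values, others at iteration-$k$ values) is not smaller than before that block update, the block update is recomputed without acceleration: $\tilde u^{k+1}=\hat u^{k+1}=u^k$ and all extrapolated (barred) quantities of the other blocks are replaced by their non-extrapolated current values. *)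

theory Defs
  imports "Jordan_Normal_Form.Matrix"
begin

definition vnorm :: "real vec \<Rightarrow> real" where
  "vnorm v = sqrt (v \<bullet> v)"

definition minner :: "real mat \<Rightarrow> real mat \<Rightarrow> real" where
  "minner A B = (\<Sum>i<dim_row A. \<Sum>j<dim_col A. A $$ (i,j) * B $$ (i,j))"

definition fnorm :: "real mat \<Rightarrow> real" where
  "fnorm A = sqrt (minner A A)"

definition ext_v :: "real \<Rightarrow> real vec \<Rightarrow> real vec \<Rightarrow> real vec" where
  "ext_v p u u_prev = u + p \<cdot>\<^sub>v (u - u_prev)"

definition ext_m :: "real \<Rightarrow> real mat \<Rightarrow> real mat \<Rightarrow> real mat" where
  "ext_m p u u_prev = u + p \<cdot>\<^sub>m (u - u_prev)"

definition resid :: "real vec \<Rightarrow> real mat \<Rightarrow> real vec \<Rightarrow> real vec \<Rightarrow> real vec" where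
  "resid a W z b = z - W *\<^sub>v a - b"

definition phi :: "real \<Rightarrow> real vec \<Rightarrow> real mat \<Rightarrow> real vec \<Rightarrow> real vec \<Rightarrow> real" where
  "phi \<rho> a W z b = \<rho> / 2 * (vnorm (resid a W z b))\<^sup>2"

definition grad_a :: "real \<Rightarrow> real vec \<Rightarrow> real mat \<Rightarrow> real vec \<Rightarrow> real vec \<Rightarrow> real vec" where
  "grad_a \<rho> a W z b = (- \<rho>) \<cdot>\<^sub>v (transpose_mat W *\<^sub>v resid a W z b)"

definition grad_W :: "real \<Rightarrow> real vec \<Rightarrow> real mat \<Rightarrow> real vec \<Rightarrow> real vec \<Rightarrow> real mat" where
  "grad_W \<rho> a W z b =
     (- \<rho>) \<cdot>\<^sub>m mat (dim_vec (resid a W z b)) (dim_vec a)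
                    (\<lambda>(i,j). resid a W z b $ i * a $ j)"

definition grad_z :: "real \<Rightarrow> real vec \<Rightarrow> real mat \<Rightarrow> real vec \<Rightarrow> real vec \<Rightarrow> real vec" where
  "grad_z \<rho> a W z b = \<rho> \<cdot>\<^sub>v resid a W z b"

definition grad_b :: "real \<Rightarrow> real vec \<Rightarrow> real mat \<Rightarrow> real vec \<Rightarrow> real vec \<Rightarrow> real vec" where
  "grad_b \<rho> a W z b = (- \<rho>) \<cdot>\<^sub>v resid a W z b"

type_synonym tup = "real vec \<times> real mat \<times> real vec \<times> real vec"  \<comment> \<open>(a, W, z, b)\<close>

definition tup_dist :: "tup \<Rightarrow> tup \<Rightarrow> real" where
  "tup_dist u v = (case u of (a,W,z,b) \<Rightarrow> case v of (a',W',z',b') \<Rightarrow>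
     sqrt ((vnorm (a - a'))\<^sup>2 + (fnorm (W - W'))\<^sup>2 + (vnorm (z - z'))\<^sup>2 + (vnorm (b - b'))\<^sup>2))"

definition tup_norm :: "tup \<Rightarrow> real" where
  "tup_norm u = (case u of (a,W,z,b) \<Rightarrow>
     sqrt ((vnorm a)\<^sup>2 + (fnorm W)\<^sup>2 + (vnorm z)\<^sup>2 + (vnorm b)\<^sup>2))"

definition grad_dist :: "real \<Rightarrow> tup \<Rightarrow> tup \<Rightarrow> real" where
  "grad_dist \<rho> u v = (case u of (a,W,z,b) \<Rightarrow> case v of (a',W',z',b') \<Rightarrow>
     sqrt ((vnorm (grad_a \<rho> a W z b - grad_a \<rho> a' W' z' b'))\<^sup>2
         + (fnorm (grad_W \<rho> a W z b - grad_W \<rho> a' W' z' b'))\<^sup>2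
         + (vnorm (grad_z \<rho> a W z b - grad_z \<rho> a' W' z' b'))\<^sup>2
         + (vnorm (grad_b \<rho> a W z b - grad_b \<rho> a' W' z' b'))\<^sup>2))"

definition act :: "real vec \<Rightarrow> (nat \<Rightarrow> real vec) \<Rightarrow> nat \<Rightarrow> real vec" where
  "act x a l = (if l = 0 then x else a l)"

text \<open>F(W,z,a,b); R is the loss z_L |-> R(z_L; y) with the label y fixed.\<close>
definition Fobj :: "nat \<Rightarrow> real vec \<Rightarrow> real \<Rightarrow> (real vec \<Rightarrow> real) \<Rightarrow> (nat \<Rightarrow> real mat \<Rightarrow> real)
    \<Rightarrow> (nat \<Rightarrow> real mat) \<Rightarrow> (nat \<Rightarrow> real vec) \<Rightarrow> (nat \<Rightarrow> real vec) \<Rightarrow> (nat \<Rightarrow> real vec) \<Rightarrow> real" where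
  "Fobj L x \<rho> R \<Omega> W z a b =
     R (z L) + (\<Sum>l=1..L. \<Omega> l (W l)) + (\<Sum>l=1..L. phi \<rho> (act x a (l - 1)) (W l) (z l) (b l))"

definition wf_state :: "nat \<Rightarrow> (nat \<Rightarrow> nat) \<Rightarrow> (nat \<Rightarrow> real mat) \<Rightarrow> (nat \<Rightarrow> real vec)
    \<Rightarrow> (nat \<Rightarrow> real vec) \<Rightarrow> (nat \<Rightarrow> real vec) \<Rightarrow> bool" where
  "wf_state L n W z a b \<longleftrightarrow> (\<forall>l\<in>{1..L}.
     W l \<in> carrier_mat (n l) (n (l - 1)) \<and> z l \<in> carrier_vec (n l) \<and> b l \<in> carrier_vec (n l)
     \<and> (l < L \<longrightarrow> a l \<in> carrier_vec (n l)))"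

definition state_norm :: "nat \<Rightarrow> (nat \<Rightarrow> real mat) \<Rightarrow> (nat \<Rightarrow> real vec)
    \<Rightarrow> (nat \<Rightarrow> real vec) \<Rightarrow> (nat \<Rightarrow> real vec) \<Rightarrow> real" where
  "state_norm L W z a b = sqrt ((\<Sum>l=1..L. (fnorm (W l))\<^sup>2) + (\<Sum>l=1..L. (vnorm (z l))\<^sup>2)
      + (\<Sum>l=1..L-1. (vnorm (a l))\<^sup>2) + (\<Sum>l=1..L. (vnorm (b l))\<^sup>2))"

definition normWs :: "nat \<Rightarrow> (nat \<Rightarrow> real mat) \<Rightarrow> real" where
  "normWs L W = sqrt (\<Sum>l=1..L. (fnorm (W l))\<^sup>2)"

definition normVs :: "nat \<Rightarrow> nat \<Rightarrow> (nat \<Rightarrow> real vec) \<Rightarrow> real" where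
  "normVs lo hi v = sqrt (\<Sum>l=lo..hi. (vnorm (v l))\<^sup>2)"

definition box :: "(real \<Rightarrow> real) \<Rightarrow> real \<Rightarrow> nat \<Rightarrow> real vec \<Rightarrow> real vec \<Rightarrow> bool" where
  "box h \<epsilon> m z a \<longleftrightarrow> (\<forall>i<m. h (z $ i) - \<epsilon> \<le> a $ i \<and> a $ i \<le> h (z $ i) + \<epsilon>)"

definition coercive_on_feasible :: "nat \<Rightarrow> (nat \<Rightarrow> nat) \<Rightarrow> (nat \<Rightarrow> real \<Rightarrow> real) \<Rightarrow> real
    \<Rightarrow> ((nat \<Rightarrow> real mat) \<Rightarrow> (nat \<Rightarrow> real vec) \<Rightarrow> (nat \<Rightarrow> real vec) \<Rightarrow> (nat \<Rightarrow> real vec) \<Rightarrow> real)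
    \<Rightarrow> bool" where
  "coercive_on_feasible L n h \<epsilon> F \<longleftrightarrow>
     (\<forall>c. \<exists>r. \<forall>W z a b. wf_state L n W z a b \<and> (\<forall>l\<in>{1..L-1}. box (h l) \<epsilon> (n l) (z l) (a l))
        \<and> state_norm L W z a b \<ge> r \<longrightarrow> F W z a b \<ge> c)"

definition convex_on_mat :: "nat \<Rightarrow> nat \<Rightarrow> (real mat \<Rightarrow> real) \<Rightarrow> bool" where
  "convex_on_mat r c f \<longleftrightarrow> (\<forall>X\<in>carrier_mat r c. \<forall>Y\<in>carrier_mat r c. \<forall>t::real. 0 \<le> t \<and> t \<le> 1 \<longrightarrow>
      f (t \<cdot>\<^sub>m X + (1 - t) \<cdot>\<^sub>m Y) \<le> t * f X + (1 - t) * f Y)"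

definition cont_on_mat :: "nat \<Rightarrow> nat \<Rightarrow> (real mat \<Rightarrow> real) \<Rightarrow> bool" where
  "cont_on_mat r c f \<longleftrightarrow> (\<forall>X\<in>carrier_mat r c. \<forall>e>0. \<exists>d>0. \<forall>Y\<in>carrier_mat r c.
      fnorm (Y - X) < d \<longrightarrow> \<bar>f Y - f X\<bar> < e)"

definition convex_on_vec :: "nat \<Rightarrow> (real vec \<Rightarrow> real) \<Rightarrow> bool" where
  "convex_on_vec m f \<longleftrightarrow> (\<forall>X\<in>carrier_vec m. \<forall>Y\<in>carrier_vec m. \<forall>t::real. 0 \<le> t \<and> t \<le> 1 \<longrightarrow>
      f (t \<cdot>\<^sub>v X + (1 - t) \<cdot>\<^sub>v Y) \<le> t * f X + (1 - t) * f Y)"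

definition cont_on_vec :: "nat \<Rightarrow> (real vec \<Rightarrow> real) \<Rightarrow> bool" where
  "cont_on_vec m f \<longleftrightarrow> (\<forall>X\<in>carrier_vec m. \<forall>e>0. \<exists>d>0. \<forall>Y\<in>carrier_vec m.
      vnorm (Y - X) < d \<longrightarrow> \<bar>f Y - f X\<bar> < e)"

definition frechet_subdiff_mat :: "nat \<Rightarrow> nat \<Rightarrow> (real mat \<Rightarrow> real) \<Rightarrow> real mat \<Rightarrow> real mat set" where
  "frechet_subdiff_mat r c f X = {G \<in> carrier_mat r c. \<forall>e>0. \<exists>d>0. \<forall>Y\<in>carrier_mat r c.
      fnorm (Y - X) < d \<longrightarrow> f Y \<ge> f X + minner G (Y - X) - e * fnorm (Y - X)}"

definition limiting_subdiff_mat :: "nat \<Rightarrow> nat \<Rightarrow> (real mat \<Rightarrow> real) \<Rightarrow> real mat \<Rightarrow> real mat set" where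
  "limiting_subdiff_mat r c f X = {G \<in> carrier_mat r c. \<exists>Xs Gs.
      (\<forall>j. Xs j \<in> carrier_mat r c \<and> Gs j \<in> frechet_subdiff_mat r c f (Xs j))
      \<and> (\<lambda>j. fnorm (Xs j - X)) \<longlonglongrightarrow> 0
      \<and> (\<lambda>j. f (Xs j)) \<longlonglongrightarrow> f X
      \<and> (\<lambda>j. fnorm (Gs j - G)) \<longlonglongrightarrow> 0}"

text \<open>W-update: Wn minimises the linearised model over R^{r x c}; theta > 0 satisfies the
  backtracking (descent) inequality; aT zT bT are the non-extrapolated values on the right.\<close>
definition W_step :: "real \<Rightarrow> (real mat \<Rightarrow> real) \<Rightarrow> nat \<Rightarrow> nat
    \<Rightarrow> real vec \<Rightarrow> real mat \<Rightarrow> real mat \<Rightarrow> real vec \<Rightarrow> real vec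
    \<Rightarrow> real vec \<Rightarrow> real vec \<Rightarrow> real vec \<Rightarrow> real \<Rightarrow> real mat \<Rightarrow> bool" where
  "W_step \<rho> \<Omega>l r c aa Wh Wt zz bb aT zT bT \<theta> Wn \<longleftrightarrow>
    (let G = grad_W \<rho> aa Wh zz bb;
         obj = (\<lambda>V. minner G (V - Wt) + \<theta> / 2 * (fnorm (V - Wt))\<^sup>2 + \<Omega>l V) in
     \<theta> > 0 \<and> Wn \<in> carrier_mat r c \<and> (\<forall>V\<in>carrier_mat r c. obj Wn \<le> obj V)
     \<and> phi \<rho> aa Wt zz bb + minner G (Wn - Wt) + \<theta> / 2 * (fnorm (Wn - Wt))\<^sup>2 \<ge> phi \<rho> aT Wn zT bT)"

definition b_step :: "real \<Rightarrow> real vec \<Rightarrow> real mat \<Rightarrow> real vec \<Rightarrow> real vec \<Rightarrow> real vec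
    \<Rightarrow> real vec \<Rightarrow> real mat \<Rightarrow> real vec \<Rightarrow> real \<Rightarrow> real vec \<Rightarrow> bool" where
  "b_step \<rho> aa WW zz bh bt aT WT zT \<xi> bn \<longleftrightarrow>
    (let G = grad_b \<rho> aa WW zz bh in
     \<xi> > 0 \<and> bn = bt - (1 / \<xi>) \<cdot>\<^sub>v G
     \<and> phi \<rho> aa WW zz bt + G \<bullet> (bn - bt) + \<xi> / 2 * (vnorm (bn - bt))\<^sup>2 \<ge> phi \<rho> aT WT zT bn)"

text \<open>z-update for a hidden layer (l < L): constrained by the current a_l^k.\<close>
definition z_step_hidden :: "real \<Rightarrow> (real \<Rightarrow> real) \<Rightarrow> real \<Rightarrow> nat
    \<Rightarrow> real vec \<Rightarrow> real mat \<Rightarrow> real vec \<Rightarrow> real vec \<Rightarrow> real vec \<Rightarrow> real vec \<Rightarrow> real vec \<Rightarrow> bool" where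
  "z_step_hidden \<rho> hl \<epsilon> m aa WW zh bb zt acon zn \<longleftrightarrow>
    (let G = grad_z \<rho> aa WW zh bb;
         obj = (\<lambda>v. G \<bullet> (v - zt) + \<rho> / 2 * (vnorm (v - zt))\<^sup>2) in
     zn \<in> carrier_vec m \<and> box hl \<epsilon> m zn acon
     \<and> (\<forall>v\<in>carrier_vec m. box hl \<epsilon> m v acon \<longrightarrow> obj zn \<le> obj v))"

definition z_step_last :: "real \<Rightarrow> (real vec \<Rightarrow> real) \<Rightarrow> nat
    \<Rightarrow> real vec \<Rightarrow> real mat \<Rightarrow> real vec \<Rightarrow> real vec \<Rightarrow> real vec \<Rightarrow> real vec \<Rightarrow> bool" where
  "z_step_last \<rho> R m aa WW zh bb zt zn \<longleftrightarrow>
    (let G = grad_z \<rho> aa WW zh bb;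
         obj = (\<lambda>v. G \<bullet> (v - zt) + \<rho> / 2 * (vnorm (v - zt))\<^sup>2 + R v) in
     zn \<in> carrier_vec m \<and> (\<forall>v\<in>carrier_vec m. obj zn \<le> obj v))"

text \<open>a-update (l < L): constrained by h_l(zc) with zc the (extrapolated) new z_l.\<close>
definition a_step :: "real \<Rightarrow> (real \<Rightarrow> real) \<Rightarrow> real \<Rightarrow> nat
    \<Rightarrow> real vec \<Rightarrow> real mat \<Rightarrow> real vec \<Rightarrow> real vec \<Rightarrow> real vec \<Rightarrow> real vec
    \<Rightarrow> real mat \<Rightarrow> real vec \<Rightarrow> real vec \<Rightarrow> real \<Rightarrow> real vec \<Rightarrow> bool" where
  "a_step \<rho> hl \<epsilon> m ah WW zz bb atl zc WT zT bT \<tau> an \<longleftrightarrow>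
    (let G = grad_a \<rho> ah WW zz bb;
         obj = (\<lambda>v. G \<bullet> (v - atl) + \<tau> / 2 * (vnorm (v - atl))\<^sup>2) in
     \<tau> > 0 \<and> an \<in> carrier_vec m \<and> box hl \<epsilon> m zc an
     \<and> (\<forall>v\<in>carrier_vec m. box hl \<epsilon> m zc v \<longrightarrow> obj an \<le> obj v)
     \<and> phi \<rho> atl WW zz bb + G \<bullet> (an - atl) + \<tau> / 2 * (vnorm (an - atl))\<^sup>2 \<ge> phi \<rho> an WT zT bT)"

text \<open>mix c u k: blocks with index < c are already at iteration k+1, the others at iteration k.\<close>
definition mix :: "nat \<Rightarrow> (nat \<Rightarrow> nat \<Rightarrow> 'a) \<Rightarrow> nat \<Rightarrow> nat \<Rightarrow> 'a" where
  "mix c u k = (\<lambda>l. if l < c then u (Suc k) l else u k l)"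

text \<open>Iterates are indexed k = 0,1,...; u^{k-1} for k = 0 is u^0 (natural subtraction), i.e. the
  extrapolation at the first iteration is void.  Parameters th, xi, ta :: nat => nat => real
  with th (Suc k) l = theta_l^{k+1} etc.  Each block update is the accelerated one if it strictly
  decreases F, otherwise (safeguard) the non-accelerated recomputation.\<close>
definition tiam :: "nat \<Rightarrow> (nat \<Rightarrow> nat) \<Rightarrow> real vec \<Rightarrow> (real vec \<Rightarrow> real) \<Rightarrow> (nat \<Rightarrow> real mat \<Rightarrow> real)
    \<Rightarrow> (nat \<Rightarrow> real \<Rightarrow> real) \<Rightarrow> real \<Rightarrow> real \<Rightarrow> real \<Rightarrow> real \<Rightarrow> real
    \<Rightarrow> (nat \<Rightarrow> nat \<Rightarrow> real mat) \<Rightarrow> (nat \<Rightarrow> nat \<Rightarrow> real vec) \<Rightarrow> (nat \<Rightarrow> nat \<Rightarrow> real vec)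
    \<Rightarrow> (nat \<Rightarrow> nat \<Rightarrow> real vec)
    \<Rightarrow> (nat \<Rightarrow> nat \<Rightarrow> real) \<Rightarrow> (nat \<Rightarrow> nat \<Rightarrow> real) \<Rightarrow> (nat \<Rightarrow> nat \<Rightarrow> real) \<Rightarrow> bool" where
  "tiam L n x R \<Omega> h \<rho> \<epsilon> p1 p2 p3 Ws zs as bs th xi ta \<longleftrightarrow>
   (\<forall>k. wf_state L n (Ws k) (zs k) (as k) (bs k)) \<and>
   (\<forall>k. \<forall>l\<in>{1..L}.
     (let F = Fobj L x \<rho> R \<Omega>;
          A = (\<lambda>j i. act x (as j) i);
          \<comment> \<open>extrapolated a_{l-1}^{k+1}\<close>
          abar = ext_v p3 (A (Suc k) (l - 1)) (A k (l - 1));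
          anew = A (Suc k) (l - 1);
          \<comment> \<open>W_l update\<close>
          Wacc = (\<lambda>\<theta> Wn. W_step \<rho> (\<Omega> l) (n l) (n (l - 1)) abar
                   (ext_m p2 (Ws k l) (Ws (k - 1) l)) (ext_m p1 (Ws k l) (Ws (k - 1) l))
                   (ext_v p3 (zs k l) (zs (k - 1) l)) (ext_v p3 (bs k l) (bs (k - 1) l))
                   anew (zs k l) (bs k l) \<theta> Wn);
          Wnon = (\<lambda>\<theta> Wn. W_step \<rho> (\<Omega> l) (n l) (n (l - 1)) anew (Ws k l) (Ws k l)
                   (zs k l) (bs k l) anew (zs k l) (bs k l) \<theta> Wn);
          FW0 = F (mix l Ws k) (mix l zs k) (mix l as k) (mix l bs k);
          FW1 = (\<lambda>Wc. F ((mix l Ws k)(l := Wc)) (mix l zs k) (mix l as k) (mix l bs k));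
          \<comment> \<open>b_l update\<close>
          bacc = (\<lambda>\<xi> bn. b_step \<rho> abar (ext_m p3 (Ws (Suc k) l) (Ws k l))
                   (ext_v p3 (zs k l) (zs (k - 1) l))
                   (ext_v p2 (bs k l) (bs (k - 1) l)) (ext_v p1 (bs k l) (bs (k - 1) l))
                   anew (Ws (Suc k) l) (zs k l) \<xi> bn);
          bnon = (\<lambda>\<xi> bn. b_step \<rho> anew (Ws (Suc k) l) (zs k l) (bs k l) (bs k l)
                   anew (Ws (Suc k) l) (zs k l) \<xi> bn);
          Fb0 = F (mix (Suc l) Ws k) (mix l zs k) (mix l as k) (mix l bs k);
          Fb1 = (\<lambda>bc. F (mix (Suc l) Ws k) (mix l zs k) (mix l as k) ((mix l bs k)(l := bc)));
          \<comment> \<open>z_l update\<close>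
          zWW = ext_m p3 (Ws (Suc k) l) (Ws k l);
          zbb = ext_v p3 (bs (Suc k) l) (bs k l);
          zh = ext_v p2 (zs k l) (zs (k - 1) l);
          zt = ext_v p1 (zs k l) (zs (k - 1) l);
          zacc = (\<lambda>zn. if l < L then z_step_hidden \<rho> (h l) \<epsilon> (n l) abar zWW zh zbb zt (as k l) zn
                                 else z_step_last \<rho> R (n l) abar zWW zh zbb zt zn);
          znon = (\<lambda>zn. if l < L then z_step_hidden \<rho> (h l) \<epsilon> (n l) anew (Ws (Suc k) l) (zs k l)
                                        (bs (Suc k) l) (zs k l) (as k l) zn
                                 else z_step_last \<rho> R (n l) anew (Ws (Suc k) l) (zs k l)
                                        (bs (Suc k) l) (zs k l) zn);
          Fz0 = F (mix (Suc l) Ws k) (mix l zs k) (mix l as k) (mix (Suc l) bs k);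
          Fz1 = (\<lambda>zc. F (mix (Suc l) Ws k) ((mix l zs k)(l := zc)) (mix l as k) (mix (Suc l) bs k));
          \<comment> \<open>a_l update (l < L)\<close>
          aacc = (\<lambda>\<tau> an. a_step \<rho> (h l) \<epsilon> (n l)
                   (ext_v p2 (as k l) (as (k - 1) l))
                   (ext_m p3 (Ws k (Suc l)) (Ws (k - 1) (Suc l)))
                   (ext_v p3 (zs k (Suc l)) (zs (k - 1) (Suc l)))
                   (ext_v p3 (bs k (Suc l)) (bs (k - 1) (Suc l)))
                   (ext_v p1 (as k l) (as (k - 1) l))
                   (ext_v p3 (zs (Suc k) l) (zs k l))
                   (Ws k (Suc l)) (zs k (Suc l)) (bs k (Suc l)) \<tau> an);
          anon = (\<lambda>\<tau> an. a_step \<rho> (h l) \<epsilon> (n l) (as k l) (Ws k (Suc l)) (zs k (Suc l))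
                   (bs k (Suc l)) (as k l) (zs (Suc k) l)
                   (Ws k (Suc l)) (zs k (Suc l)) (bs k (Suc l)) \<tau> an);
          Fa0 = F (mix (Suc l) Ws k) (mix (Suc l) zs k) (mix l as k) (mix (Suc l) bs k);
          Fa1 = (\<lambda>ac. F (mix (Suc l) Ws k) (mix (Suc l) zs k) ((mix l as k)(l := ac)) (mix (Suc l) bs k))
      in
       ((Wacc (th (Suc k) l) (Ws (Suc k) l) \<and> FW1 (Ws (Suc k) l) < FW0)
        \<or> ((\<exists>\<theta>' Wc. Wacc \<theta>' Wc \<and> \<not> FW1 Wc < FW0) \<and> Wnon (th (Suc k) l) (Ws (Suc k) l)))
     \<and> ((bacc (xi (Suc k) l) (bs (Suc k) l) \<and> Fb1 (bs (Suc k) l) < Fb0)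
        \<or> ((\<exists>\<xi>' bc. bacc \<xi>' bc \<and> \<not> Fb1 bc < Fb0) \<and> bnon (xi (Suc k) l) (bs (Suc k) l)))
     \<and> ((zacc (zs (Suc k) l) \<and> Fz1 (zs (Suc k) l) < Fz0)
        \<or> ((\<exists>zc. zacc zc \<and> \<not> Fz1 zc < Fz0) \<and> znon (zs (Suc k) l)))
     \<and> (l < L \<longrightarrow>
        ((aacc (ta (Suc k) l) (as (Suc k) l) \<and> Fa1 (as (Suc k) l) < Fa0)
        \<or> ((\<exists>\<tau>' ac. aacc \<tau>' ac \<and> \<not> Fa1 ac < Fa0) \<and> anon (ta (Suc k) l) (as (Suc k) l))))))"

definition pts_v :: "real \<Rightarrow> real \<Rightarrow> real \<Rightarrow> (nat \<Rightarrow> real vec) \<Rightarrow> real vec set" where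
  "pts_v p1 p2 p3 u = range u \<union> {ext_v p (u k) (u (k - 1)) | k p. p \<in> {p1, p2, p3}}"

definition pts_m :: "real \<Rightarrow> real \<Rightarrow> real \<Rightarrow> (nat \<Rightarrow> real mat) \<Rightarrow> real mat set" where
  "pts_m p1 p2 p3 u = range u \<union> {ext_m p (u k) (u (k - 1)) | k p. p \<in> {p1, p2, p3}}"

definition bounded_tup :: "tup set \<Rightarrow> bool" where
  "bounded_tup S \<longleftrightarrow> (\<exists>B. \<forall>u\<in>S. tup_norm u \<le> B)"

definition grad_lipschitz_on :: "real \<Rightarrow> real \<Rightarrow> tup set \<Rightarrow> bool" where
  "grad_lipschitz_on \<rho> M S \<longleftrightarrow> (\<forall>u\<in>S. \<forall>v\<in>S. grad_dist \<rho> u v \<le> M * tup_dist u v)"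

end

theory Submission
  imports Defs "HOL-Analysis.L2_Norm"
begin

(* The W-update minimises a linearisation of phi at an extrapolated point plus the convex
   regulariser Omega_l, so its optimality condition makes -(G + theta (W^{k+1} - W~)) a subgradient
   of Omega_l at W^{k+1}, where G is the W-gradient of phi at the extrapolated point and W~ the
   extrapolated W^k.  Since phi is convex in W, adding the W-gradient of phi at the new iterate
   gives a global subgradient g of W_l |-> F, in particular an element of the limiting
   subdifferential.  By the Lipschitz bound, |g| is at most M times the distance from the new
   iterate to the extrapolated point plus theta |W^{k+1} - W~|, and as 0 <= p_i < 1 both
   distances are bounded by the displacements of the last two iterations.  The safeguard update is
   the case without extrapolation.  Summing over the layers in l2 gives the bound. *)

section \<open>Euclidean and Frobenius norms\<close>

lemma vnorm_L2: "vnorm v = L2_set (\<lambda>i. v $ i) {..<dim_vec v}"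
  unfolding vnorm_def L2_set_def scalar_prod_def
  by (simp add: power2_eq_square atLeast0LessThan)

lemma vnorm_eq_L2_set:
  "v \<in> carrier_vec m \<Longrightarrow> (\<And>i. i < m \<Longrightarrow> v $ i = f i) \<Longrightarrow> vnorm v = L2_set f {..<m}"
  by (auto simp: vnorm_L2 intro: L2_set_cong)

lemma vnorm_nonneg [simp]: "0 \<le> vnorm v"
  by (simp add: vnorm_L2)

lemma vnorm_square: "v \<in> carrier_vec m \<Longrightarrow> (vnorm v)\<^sup>2 = (\<Sum>i<m. (v $ i)\<^sup>2)"
  by (simp add: vnorm_L2 L2_set_def sum_nonneg)

lemma vnorm_self_diff [simp]: "vnorm (v - v) = 0"
  by (simp add: vnorm_L2 L2_set_0')

lemma vnorm_add_le:
  assumes "v \<in> carrier_vec m" "w \<in> carrier_vec m"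
  shows "vnorm (v + w) \<le> vnorm v + vnorm w"
proof -
  have "vnorm (v + w) = L2_set (\<lambda>i. v $ i + w $ i) {..<m}"
    using assms by (intro vnorm_eq_L2_set) auto
  also have "\<dots> \<le> L2_set (\<lambda>i. v $ i) {..<m} + L2_set (\<lambda>i. w $ i) {..<m}"
    by (rule L2_set_triangle_ineq)
  finally show ?thesis
    using assms by (simp add: vnorm_L2)
qed

lemma vnorm_smult: "vnorm (c \<cdot>\<^sub>v v) = \<bar>c\<bar> * vnorm v"
proof -
  have "vnorm (c \<cdot>\<^sub>v v) = L2_set (\<lambda>i. \<bar>c\<bar> * v $ i) {..<dim_vec v}"
    by (simp add: vnorm_L2 L2_set_def power_mult_distrib)
  then show ?thesis
    by (simp add: vnorm_L2 L2_set_right_distrib)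
qed

lemma minner_sum:
  "A \<in> carrier_mat r c \<Longrightarrow> minner A B = (\<Sum>p\<in>{..<r}\<times>{..<c}. A $$ p * B $$ p)"
  unfolding minner_def by (simp add: sum.cartesian_product)

lemma fnorm_L2: "A \<in> carrier_mat r c \<Longrightarrow> fnorm A = L2_set (\<lambda>p. A $$ p) ({..<r}\<times>{..<c})"
  unfolding fnorm_def L2_set_def by (simp add: minner_sum power2_eq_square)

lemma fnorm_eq_L2_set:
  "A \<in> carrier_mat r c \<Longrightarrow> (\<And>i j. i < r \<Longrightarrow> j < c \<Longrightarrow> A $$ (i, j) = f (i, j))
   \<Longrightarrow> fnorm A = L2_set f ({..<r}\<times>{..<c})"
  by (auto simp: fnorm_L2 intro: L2_set_cong)

lemma fnorm_nonneg [simp]: "0 \<le> fnorm A"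
  using fnorm_L2[of A "dim_row A" "dim_col A"] by simp

lemma fnorm_square: "(fnorm A)\<^sup>2 = minner A A"
  unfolding fnorm_def minner_def by (simp add: sum_nonneg)

lemma fnorm_self_diff [simp]: "fnorm (A - A) = 0"
  unfolding fnorm_def minner_def by simp

lemma fnorm_add_le:
  assumes "A \<in> carrier_mat r c" "B \<in> carrier_mat r c"
  shows "fnorm (A + B) \<le> fnorm A + fnorm B"
proof -
  have "fnorm (A + B) = L2_set (\<lambda>p. A $$ p + B $$ p) ({..<r}\<times>{..<c})"
    using assms by (intro fnorm_eq_L2_set) auto
  also have "\<dots> \<le> L2_set (\<lambda>p. A $$ p) ({..<r}\<times>{..<c}) + L2_set (\<lambda>p. B $$ p) ({..<r}\<times>{..<c})"
    by (rule L2_set_triangle_ineq)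
  finally show ?thesis
    using assms by (simp add: fnorm_L2)
qed

lemma fnorm_smult: "fnorm (t \<cdot>\<^sub>m A) = \<bar>t\<bar> * fnorm A"
proof -
  let ?I = "{..<dim_row A}\<times>{..<dim_col A}"
  have "fnorm (t \<cdot>\<^sub>m A) = L2_set (\<lambda>p. t * A $$ p) ?I"
    by (intro fnorm_eq_L2_set) auto
  also have "\<dots> = L2_set (\<lambda>p. \<bar>t\<bar> * A $$ p) ?I"
    by (simp add: L2_set_def power_mult_distrib)
  finally show ?thesis
    by (simp add: fnorm_L2[of _ "dim_row A" "dim_col A"] L2_set_right_distrib)
qed

lemma ext_v_zero: "u \<in> carrier_vec m \<Longrightarrow> w \<in> carrier_vec m \<Longrightarrow> ext_v 0 u w = u"
  unfolding ext_v_def by auto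

lemma ext_m_zero: "u \<in> carrier_mat r c \<Longrightarrow> w \<in> carrier_mat r c \<Longrightarrow> ext_m 0 u w = u"
  unfolding ext_m_def by auto

lemma ext_v_carrier: "u \<in> carrier_vec m \<Longrightarrow> w \<in> carrier_vec m \<Longrightarrow> ext_v p u w \<in> carrier_vec m"
  unfolding ext_v_def by auto

lemma ext_m_carrier: "u \<in> carrier_mat r c \<Longrightarrow> w \<in> carrier_mat r c \<Longrightarrow> ext_m p u w \<in> carrier_mat r c"
  unfolding ext_m_def by auto

lemma vnorm_diff_ext_v_le:
  assumes "u \<in> carrier_vec m" "v \<in> carrier_vec m" "w \<in> carrier_vec m" "0 \<le> p" "p \<le> 1"
  shows "vnorm (u - ext_v p v w) \<le> vnorm (u - v) + vnorm (v - w)"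
proof -
  have split: "u - ext_v p v w = (u - v) + (- p) \<cdot>\<^sub>v (v - w)"
    using assms(1-3) unfolding ext_v_def by (intro eq_vecI) (auto simp: algebra_simps)
  have "vnorm (u - ext_v p v w) \<le> vnorm (u - v) + vnorm ((- p) \<cdot>\<^sub>v (v - w))"
    unfolding split by (rule vnorm_add_le[of _ m]) (use assms(1-3) in auto)
  also have "\<dots> \<le> vnorm (u - v) + vnorm (v - w)"
    using assms(4,5) by (simp add: vnorm_smult mult_left_le_one_le)
  finally show ?thesis .
qed

lemma fnorm_diff_ext_m_le:
  assumes "u \<in> carrier_mat r c" "v \<in> carrier_mat r c" "w \<in> carrier_mat r c" "0 \<le> p" "p \<le> 1"
  shows "fnorm (u - ext_m p v w) \<le> fnorm (u - v) + fnorm (v - w)"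
proof -
  have split: "u - ext_m p v w = (u - v) + (- p) \<cdot>\<^sub>m (v - w)"
    using assms(1-3) unfolding ext_m_def by (intro eq_matI) (auto simp: algebra_simps)
  have "fnorm (u - ext_m p v w) \<le> fnorm (u - v) + fnorm ((- p) \<cdot>\<^sub>m (v - w))"
    unfolding split by (rule fnorm_add_le[of _ r c]) (use assms(1-3) in auto)
  also have "\<dots> \<le> fnorm (u - v) + fnorm (v - w)"
    using assms(4,5) by (simp add: fnorm_smult mult_left_le_one_le)
  finally show ?thesis .
qed

lemma minner_comm: "A \<in> carrier_mat r c \<Longrightarrow> B \<in> carrier_mat r c \<Longrightarrow> minner A B = minner B A"
  by (simp add: minner_sum[of _ r c] mult.commute)

lemma minner_add_smult_left:
  assumes "A \<in> carrier_mat r c" "B \<in> carrier_mat r c" "C \<in> carrier_mat r c"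
  shows "minner (A + t \<cdot>\<^sub>m B) C = minner A C + t * minner B C"
proof -
  have "minner (A + t \<cdot>\<^sub>m B) C = (\<Sum>p\<in>{..<r}\<times>{..<c}. A $$ p * C $$ p + t * (B $$ p * C $$ p))"
    using assms by (subst minner_sum[of _ r c]) (auto simp: algebra_simps intro!: sum.cong)
  then show ?thesis
    using assms by (simp add: minner_sum[of _ r c] sum.distrib sum_distrib_left)
qed

lemma minner_diff_left:
  assumes "A \<in> carrier_mat r c" "B \<in> carrier_mat r c" "C \<in> carrier_mat r c"
  shows "minner (A - B) C = minner A C - minner B C"
proof -
  have "minner (A - B) C = (\<Sum>p\<in>{..<r}\<times>{..<c}. A $$ p * C $$ p - B $$ p * C $$ p)"
    using assms by (subst minner_sum[of _ r c]) (auto simp: algebra_simps intro!: sum.cong)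
  then show ?thesis
    using assms by (simp add: minner_sum[of _ r c] sum_subtractf)
qed

lemma minner_add_smult_right:
  assumes "A \<in> carrier_mat r c" "B \<in> carrier_mat r c" "C \<in> carrier_mat r c"
  shows "minner A (B + t \<cdot>\<^sub>m C) = minner A B + t * minner A C"
  using assms minner_add_smult_left[OF assms(2,3,1)]
  by (simp add: minner_comm[of A r c])

section \<open>Subgradients produced by the W-update\<close>

lemma nonpos_if_bounded_by_small_multiples:
  fixes d K :: real
  assumes "\<And>t. 0 < t \<Longrightarrow> t \<le> 1 \<Longrightarrow> d \<le> t * K"
  shows "d \<le> 0"
proof (rule tendsto_lowerbound)
  show "((\<lambda>t. t * K) \<longlongrightarrow> 0) (at_right 0)"
    by (intro tendsto_mult_left_zero tendsto_ident_at)
  show "\<forall>\<^sub>F t in at_right 0. d \<le> t * K"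
  proof (rule eventually_mono)
    show "\<forall>\<^sub>F t in at_right 0. t \<in> {0<..<1::real}"
      by (rule eventually_at_right_real) simp
  qed (use assms in auto)
qed simp

lemma prox_minimizer_subgradient:
  fixes \<Omega> :: "real mat \<Rightarrow> real"
  assumes conv: "convex_on_mat r c \<Omega>"
    and X: "X \<in> carrier_mat r c" and Wt: "Wt \<in> carrier_mat r c" and G: "G \<in> carrier_mat r c"
    and Y: "Y \<in> carrier_mat r c"
    and min: "\<And>V. V \<in> carrier_mat r c \<Longrightarrow>
      minner G (X - Wt) + \<theta> / 2 * (fnorm (X - Wt))\<^sup>2 + \<Omega> X
        \<le> minner G (V - Wt) + \<theta> / 2 * (fnorm (V - Wt))\<^sup>2 + \<Omega> V"
  shows "\<Omega> X - minner (G + \<theta> \<cdot>\<^sub>m (X - Wt)) (Y - X) \<le> \<Omega> Y"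
proof -
  define E D where "E = X - Wt" and "D = Y - X"
  have E: "E \<in> carrier_mat r c" and D: "D \<in> carrier_mat r c"
    using X Wt Y by (auto simp: E_def D_def)
  have "\<Omega> X - \<Omega> Y - minner (G + \<theta> \<cdot>\<^sub>m E) D \<le> t * (\<theta> / 2 * minner D D)"
    if t: "0 < t" "t \<le> 1" for t
  proof -
    have V: "X + t \<cdot>\<^sub>m D \<in> carrier_mat r c"
      using X D by simp
    have "X + t \<cdot>\<^sub>m D = t \<cdot>\<^sub>m Y + (1 - t) \<cdot>\<^sub>m X"
      using X Y by (intro eq_matI) (auto simp: D_def algebra_simps)
    then have convex: "\<Omega> (X + t \<cdot>\<^sub>m D) \<le> t * \<Omega> Y + (1 - t) * \<Omega> X"
      using conv X Y t unfolding convex_on_mat_def by auto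
    have shift: "X + t \<cdot>\<^sub>m D - Wt = E + t \<cdot>\<^sub>m D"
      using X Wt D by (intro eq_matI) (auto simp: E_def)
    have lin: "minner G (E + t \<cdot>\<^sub>m D) = minner G E + t * minner G D"
      using G E D by (rule minner_add_smult_right)
    have quad: "minner (E + t \<cdot>\<^sub>m D) (E + t \<cdot>\<^sub>m D)
        = minner E E + 2 * t * minner E D + t\<^sup>2 * minner D D"
      using E D minner_comm[OF D E]
      by (simp add: minner_add_smult_left[of _ r c] minner_add_smult_right[of _ r c]
          algebra_simps power2_eq_square)
    have "0 \<le> t * (minner (G + \<theta> \<cdot>\<^sub>m E) D + \<Omega> Y - \<Omega> X + t * (\<theta> / 2 * minner D D))"
      using min[OF V] convex
      unfolding shift fnorm_square lin quad E_def[symmetric] minner_add_smult_left[OF G E D]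
      by (simp add: algebra_simps power2_eq_square)
    then show ?thesis
      using t by (simp add: zero_le_mult_iff)
  qed
  then have "\<Omega> X - \<Omega> Y - minner (G + \<theta> \<cdot>\<^sub>m E) D \<le> 0"
    by (rule nonpos_if_bounded_by_small_multiples)
  then show ?thesis
    by (simp add: E_def D_def)
qed

lemma resid_index:
  assumes "a \<in> carrier_vec c" "W \<in> carrier_mat r c" "z \<in> carrier_vec r" "b \<in> carrier_vec r" "i < r"
  shows "resid a W z b $ i = z $ i - (\<Sum>j<c. W $$ (i, j) * a $ j) - b $ i"
  using assms unfolding resid_def
  by (auto simp: scalar_prod_def atLeast0LessThan intro!: sum.cong)

lemma resid_carrier: "b \<in> carrier_vec r \<Longrightarrow> resid a W z b \<in> carrier_vec r"
  unfolding resid_def carrier_vec_def by simp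

lemma phi_W_gradient_ineq:
  assumes "0 \<le> \<rho>" and a: "a \<in> carrier_vec c" and z: "z \<in> carrier_vec r" and b: "b \<in> carrier_vec r"
    and X: "X \<in> carrier_mat r c" and Y: "Y \<in> carrier_mat r c"
  shows "phi \<rho> a X z b + minner (grad_W \<rho> a X z b) (Y - X) \<le> phi \<rho> a Y z b"
proof -
  define res where "res i = resid a X z b $ i" for i
  define e where "e i = (\<Sum>j<c. (Y $$ (i, j) - X $$ (i, j)) * a $ j)" for i
  have res_Y: "resid a Y z b $ i = res i - e i" if "i < r" for i
    using resid_index[OF a Y z b that] resid_index[OF a X z b that] unfolding res_def e_def
    by (simp add: algebra_simps sum_subtractf)
  have phi_X: "phi \<rho> a X z b = \<rho> / 2 * (\<Sum>i<r. (res i)\<^sup>2)"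
    unfolding phi_def res_def vnorm_square[OF resid_carrier[OF b]] ..
  have phi_Y: "phi \<rho> a Y z b = \<rho> / 2 * (\<Sum>i<r. (res i - e i)\<^sup>2)"
    unfolding phi_def vnorm_square[OF resid_carrier[OF b]] by (simp add: res_Y)
  have "minner (grad_W \<rho> a X z b) (Y - X)
      = (\<Sum>i<r. \<Sum>j<c. - \<rho> * (res i * a $ j) * (Y $$ (i, j) - X $$ (i, j)))"
    unfolding minner_def grad_W_def res_def using a b X Y resid_carrier[OF b, of a X z]
    by (auto intro!: sum.cong)
  also have "\<dots> = - \<rho> * (\<Sum>i<r. res i * e i)"
    unfolding e_def by (simp add: sum_distrib_left algebra_simps)
  finally have minner_eq: "minner (grad_W \<rho> a X z b) (Y - X) = - \<rho> * (\<Sum>i<r. res i * e i)" .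
  have "(\<Sum>i<r. (res i)\<^sup>2) - 2 * (\<Sum>i<r. res i * e i) \<le> (\<Sum>i<r. (res i - e i)\<^sup>2)"
    unfolding sum_distrib_left sum_subtractf[symmetric]
    by (rule sum_mono) (simp add: power2_eq_square algebra_simps)
  then have "\<rho> / 2 * ((\<Sum>i<r. (res i)\<^sup>2) - 2 * (\<Sum>i<r. res i * e i))
      \<le> \<rho> / 2 * (\<Sum>i<r. (res i - e i)\<^sup>2)"
    using assms(1) by (simp add: mult_left_mono)
  then show ?thesis
    unfolding phi_X phi_Y minner_eq by (simp add: algebra_simps)
qed

lemma grad_W_carrier: "a \<in> carrier_vec c \<Longrightarrow> b \<in> carrier_vec r \<Longrightarrow> grad_W \<rho> a W z b \<in> carrier_mat r c"
  unfolding grad_W_def resid_def by auto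

lemma W_step_subgradient:
  assumes step: "W_step \<rho> \<Omega>l r c aa Wh Wt zz bb aT zT bT \<theta> X"
    and conv: "convex_on_mat r c \<Omega>l" and "0 \<le> \<rho>"
    and aa: "aa \<in> carrier_vec c" and Wt: "Wt \<in> carrier_mat r c" and bb: "bb \<in> carrier_vec r"
    and a: "a \<in> carrier_vec c" and z: "z \<in> carrier_vec r" and b: "b \<in> carrier_vec r"
  defines "g \<equiv> grad_W \<rho> a X z b - grad_W \<rho> aa Wh zz bb - \<theta> \<cdot>\<^sub>m (X - Wt)"
  shows "g \<in> carrier_mat r c"
    and "\<And>Y. Y \<in> carrier_mat r c \<Longrightarrow> \<Omega>l X + phi \<rho> a X z b + minner g (Y - X) \<le> \<Omega>l Y + phi \<rho> a Y z b"
    and "fnorm g \<le> fnorm (grad_W \<rho> a X z b - grad_W \<rho> aa Wh zz bb) + \<theta> * fnorm (X - Wt)"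
proof -
  define G Gn where "G = grad_W \<rho> aa Wh zz bb" and "Gn = grad_W \<rho> a X z b"
  have G: "G \<in> carrier_mat r c" and Gn: "Gn \<in> carrier_mat r c"
    using grad_W_carrier aa bb a b by (auto simp: G_def Gn_def)
  have \<theta>: "\<theta> > 0" and X: "X \<in> carrier_mat r c"
    and min: "\<And>V. V \<in> carrier_mat r c \<Longrightarrow>
      minner G (X - Wt) + \<theta> / 2 * (fnorm (X - Wt))\<^sup>2 + \<Omega>l X
        \<le> minner G (V - Wt) + \<theta> / 2 * (fnorm (V - Wt))\<^sup>2 + \<Omega>l V"
    using step unfolding W_step_def Let_def G_def by auto
  have g_split: "g = Gn - G + (- \<theta>) \<cdot>\<^sub>m (X - Wt)"
    unfolding g_def G_def[symmetric] Gn_def[symmetric]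
    using G Gn X Wt by (intro eq_matI) auto
  show g: "g \<in> carrier_mat r c"
    unfolding g_split using G Gn X Wt by auto
  show "\<Omega>l X + phi \<rho> a X z b + minner g (Y - X) \<le> \<Omega>l Y + phi \<rho> a Y z b"
    if Y: "Y \<in> carrier_mat r c" for Y
  proof -
    have "minner g (Y - X) = minner Gn (Y - X) - minner (G + \<theta> \<cdot>\<^sub>m (X - Wt)) (Y - X)"
    proof -
      have "minner g (Y - X) = minner (Gn - G) (Y - X) - \<theta> * minner (X - Wt) (Y - X)"
        unfolding g_split using G Gn X Wt Y by (subst minner_add_smult_left[of _ r c]) auto
      also have "minner (Gn - G) (Y - X) = minner Gn (Y - X) - minner G (Y - X)"
        by (rule minner_diff_left[of _ r c]) (use G Gn X Y in auto)
      finally show ?thesis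
        using G X Wt Y by (simp add: minner_add_smult_left[of _ r c] minus_carrier_mat)
    qed
    moreover have "\<Omega>l X - minner (G + \<theta> \<cdot>\<^sub>m (X - Wt)) (Y - X) \<le> \<Omega>l Y"
      using conv X Wt G Y min by (rule prox_minimizer_subgradient)
    moreover have "phi \<rho> a X z b + minner Gn (Y - X) \<le> phi \<rho> a Y z b"
      unfolding Gn_def using assms(3) a z b X Y by (rule phi_W_gradient_ineq)
    ultimately show ?thesis
      by linarith
  qed
  have "fnorm g \<le> fnorm (Gn - G) + fnorm ((- \<theta>) \<cdot>\<^sub>m (X - Wt))"
    unfolding g_split by (rule fnorm_add_le[of _ r c]) (use G Gn X Wt in auto)
  then show "fnorm g \<le> fnorm (grad_W \<rho> a X z b - grad_W \<rho> aa Wh zz bb) + \<theta> * fnorm (X - Wt)"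
    using \<theta> by (simp add: G_def Gn_def fnorm_smult)
qed

lemma subgradient_in_frechet_subdiff_mat:
  assumes "G \<in> carrier_mat r c" and "\<And>Y. Y \<in> carrier_mat r c \<Longrightarrow> f X + minner G (Y - X) \<le> f Y"
  shows "G \<in> frechet_subdiff_mat r c f X"
  unfolding frechet_subdiff_mat_def
proof (intro CollectI conjI assms(1) allI impI exI[of _ 1] ballI)
  fix e :: real and Y :: "real mat"
  assume "e > 0" "Y \<in> carrier_mat r c"
  then show "f Y \<ge> f X + minner G (Y - X) - e * fnorm (Y - X)"
    using assms(2)[of Y] by (smt (verit) fnorm_nonneg mult_nonneg_nonneg)
qed simp

lemma frechet_subdiff_in_limiting_subdiff_mat:
  assumes "X \<in> carrier_mat r c" and "G \<in> frechet_subdiff_mat r c f X"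
  shows "G \<in> limiting_subdiff_mat r c f X"
  unfolding limiting_subdiff_mat_def
proof (intro CollectI conjI exI)
  show "G \<in> carrier_mat r c"
    using assms(2) by (simp add: frechet_subdiff_mat_def)
  show "\<forall>j. (\<lambda>_. X) j \<in> carrier_mat r c \<and> (\<lambda>_. G) j \<in> frechet_subdiff_mat r c f ((\<lambda>_. X) j)"
    using assms by simp
qed simp_all

lemma Fobj_fun_upd_W:
  fixes Y :: "real mat"
  assumes "l \<in> {1..L}"
  shows "Fobj L x \<rho> R \<Omega> (W(l := Y)) z a b = \<Omega> l Y + phi \<rho> (act x a (l - 1)) Y (z l) (b l)
    + (Fobj L x \<rho> R \<Omega> W z a b - \<Omega> l (W l) - phi \<rho> (act x a (l - 1)) (W l) (z l) (b l))"
proof -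
  have upd: "sum (\<lambda>i. f i ((W(l := Y)) i)) {1..L} = sum (\<lambda>i. f i (W i)) {1..L} - f l (W l) + f l Y"
    for f :: "nat \<Rightarrow> real mat \<Rightarrow> real"
  proof -
    have "(\<Sum>i\<in>{1..L} - {l}. f i ((W(l := Y)) i)) = (\<Sum>i\<in>{1..L} - {l}. f i (W i))"
      by (rule sum.cong) auto
    then show ?thesis
      using sum.remove[OF finite_atLeastAtMost assms, of "\<lambda>i. f i ((W(l := Y)) i)"]
        sum.remove[OF finite_atLeastAtMost assms, of "\<lambda>i. f i (W i)"]
      by simp
  qed
  show ?thesis
    unfolding Fobj_def upd[of \<Omega>] upd[of "\<lambda>i V. phi \<rho> (act x a (i - 1)) V (z i) (b i)"] by linarith
qed

lemma grad_W_diff_le_lipschitz: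
  assumes "grad_lipschitz_on \<rho> M S" "(a, W, z, b) \<in> S" "(a', W', z', b') \<in> S" "0 \<le> M"
  shows "fnorm (grad_W \<rho> a W z b - grad_W \<rho> a' W' z' b')
    \<le> M * (vnorm (a - a') + fnorm (W - W') + vnorm (z - z') + vnorm (b - b'))"
proof -
  have "fnorm (grad_W \<rho> a W z b - grad_W \<rho> a' W' z' b') \<le> grad_dist \<rho> (a, W, z, b) (a', W', z', b')"
    unfolding grad_dist_def by (simp add: real_le_rsqrt)
  also have "\<dots> \<le> M * tup_dist (a, W, z, b) (a', W', z', b')"
    using assms(1-3) unfolding grad_lipschitz_on_def by blast
  also have "tup_dist (a, W, z, b) (a', W', z', b')
      \<le> vnorm (a - a') + fnorm (W - W') + vnorm (z - z') + vnorm (b - b')"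
    unfolding tup_dist_def by (simp add: real_le_lsqrt power2_eq_square algebra_simps)
  finally show ?thesis
    using assms(4) by (simp add: mult_left_mono)
qed

section \<open>The W-block of TIAM\<close>

lemma ext_v_in_pts_v:
  assumes "p \<in> {p1, p2, p3}" "q \<in> {0, 1}" "u j \<in> carrier_vec m" "u (j - 1) \<in> carrier_vec m"
  shows "ext_v (q * p) (u j) (u (j - 1)) \<in> pts_v p1 p2 p3 u"
proof -
  have "q = 0 \<or> q = 1"
    using assms(2) by simp
  then show ?thesis
    using assms(1,3,4) unfolding pts_v_def by (force simp: ext_v_zero)
qed

lemma ext_m_in_pts_m:
  assumes "p \<in> {p1, p2, p3}" "q \<in> {0, 1}" "u j \<in> carrier_mat r c" "u (j - 1) \<in> carrier_mat r c"
  shows "ext_m (q * p) (u j) (u (j - 1)) \<in> pts_m p1 p2 p3 u"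
proof -
  have "q = 0 \<or> q = 1"
    using assms(2) by simp
  then show ?thesis
    using assms(1,3,4) unfolding pts_m_def by (force simp: ext_m_zero)
qed

definition layer_iterates :: "real \<Rightarrow> real \<Rightarrow> real \<Rightarrow> real vec \<Rightarrow> (nat \<Rightarrow> nat \<Rightarrow> real mat)
    \<Rightarrow> (nat \<Rightarrow> nat \<Rightarrow> real vec) \<Rightarrow> (nat \<Rightarrow> nat \<Rightarrow> real vec) \<Rightarrow> (nat \<Rightarrow> nat \<Rightarrow> real vec)
    \<Rightarrow> nat \<Rightarrow> tup set"
  where "layer_iterates p1 p2 p3 x Ws zs as bs l = {(a, W, z, b) | a W z b.
    a \<in> pts_v p1 p2 p3 (\<lambda>j. act x (as j) (l - 1)) \<and> W \<in> pts_m p1 p2 p3 (\<lambda>j. Ws j l)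
    \<and> z \<in> pts_v p1 p2 p3 (\<lambda>j. zs j l) \<and> b \<in> pts_v p1 p2 p3 (\<lambda>j. bs j l)}"

definition layer_displacement :: "real vec \<Rightarrow> (nat \<Rightarrow> nat \<Rightarrow> real mat) \<Rightarrow> (nat \<Rightarrow> nat \<Rightarrow> real vec)
    \<Rightarrow> (nat \<Rightarrow> nat \<Rightarrow> real vec) \<Rightarrow> (nat \<Rightarrow> nat \<Rightarrow> real vec) \<Rightarrow> nat \<Rightarrow> nat \<Rightarrow> real"
  where "layer_displacement x Ws zs as bs k l =
    fnorm (Ws (Suc k) l - Ws k l) + vnorm (zs (Suc k) l - zs k l)
    + vnorm (act x (as (Suc k)) (l - 1) - act x (as k) (l - 1)) + vnorm (bs (Suc k) l - bs k l)
    + fnorm (Ws k l - Ws (k - 1) l) + vnorm (bs k l - bs (k - 1) l) + vnorm (zs k l - zs (k - 1) l)"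

lemma iterate_in_layer_iterates:
  "(act x (as j) (l - 1), Ws j l, zs j l, bs j l) \<in> layer_iterates p1 p2 p3 x Ws zs as bs l"
  by (auto simp: layer_iterates_def pts_v_def pts_m_def)

lemma wf_state_layer_carriers:
  assumes "wf_state L n W z a b" "x \<in> carrier_vec (n 0)" "l \<in> {1..L}"
  shows "W l \<in> carrier_mat (n l) (n (l - 1))" "z l \<in> carrier_vec (n l)" "b l \<in> carrier_vec (n l)"
    and "act x a (l - 1) \<in> carrier_vec (n (l - 1))"
proof -
  show "W l \<in> carrier_mat (n l) (n (l - 1))" "z l \<in> carrier_vec (n l)" "b l \<in> carrier_vec (n l)"
    using assms(1,3) unfolding wf_state_def by auto
  have "l - 1 \<in> {1..L} \<and> l - 1 < L" if "l \<noteq> 1"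
    using assms(3) that by auto
  then show "act x a (l - 1) \<in> carrier_vec (n (l - 1))"
    using assms(1,2) unfolding wf_state_def act_def by fastforce
qed

lemma tiam_wf_state:
  assumes "tiam L n x R \<Omega> h \<rho> \<epsilon> p1 p2 p3 Ws zs as bs th xi ta"
  shows "wf_state L n (Ws j) (zs j) (as j) (bs j)"
  using conjunct1[OF assms[unfolded tiam_def]] by blast

lemma tiam_extrapolation_in_layer_iterates:
  assumes tiam: "tiam L n x R \<Omega> h \<rho> \<epsilon> p1 p2 p3 Ws zs as bs th xi ta"
    and x: "x \<in> carrier_vec (n 0)" and l: "l \<in> {1..L}" and q: "q \<in> {0, 1}"
  shows "(ext_v (q * p3) (act x (as (Suc k)) (l - 1)) (act x (as k) (l - 1)),
      ext_m (q * p2) (Ws k l) (Ws (k - 1) l), ext_v (q * p3) (zs k l) (zs (k - 1) l),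
      ext_v (q * p3) (bs k l) (bs (k - 1) l)) \<in> layer_iterates p1 p2 p3 x Ws zs as bs l"
proof -
  note carriers = wf_state_layer_carriers[OF tiam_wf_state[OF tiam] x l]
  show ?thesis
    unfolding layer_iterates_def
    using ext_v_in_pts_v[of p3 p1 p2 p3 q "\<lambda>j. act x (as j) (l - 1)" "Suc k", OF _ q carriers(4,4)]
      ext_m_in_pts_m[of p2 p1 p2 p3 q "\<lambda>j. Ws j l" k, OF _ q carriers(1,1)]
      ext_v_in_pts_v[of p3 p1 p2 p3 q "\<lambda>j. zs j l" k, OF _ q carriers(2,2)]
      ext_v_in_pts_v[of p3 p1 p2 p3 q "\<lambda>j. bs j l" k, OF _ q carriers(3,3)]
    by simp
qed

(* q = 1 is the accelerated update, q = 0 the safeguard recomputation without extrapolation. *)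
lemma tiam_W_step:
  assumes tiam: "tiam L n x R \<Omega> h \<rho> \<epsilon> p1 p2 p3 Ws zs as bs th xi ta"
    and x: "x \<in> carrier_vec (n 0)" and l: "l \<in> {1..L}"
  shows "\<exists>q\<in>{0, 1}. W_step \<rho> (\<Omega> l) (n l) (n (l - 1))
    (ext_v (q * p3) (act x (as (Suc k)) (l - 1)) (act x (as k) (l - 1)))
    (ext_m (q * p2) (Ws k l) (Ws (k - 1) l)) (ext_m (q * p1) (Ws k l) (Ws (k - 1) l))
    (ext_v (q * p3) (zs k l) (zs (k - 1) l)) (ext_v (q * p3) (bs k l) (bs (k - 1) l))
    (act x (as (Suc k)) (l - 1)) (zs k l) (bs k l) (th (Suc k) l) (Ws (Suc k) l)"
proof -
  let ?a = "act x (as (Suc k)) (l - 1)"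
  have "W_step \<rho> (\<Omega> l) (n l) (n (l - 1)) (ext_v p3 ?a (act x (as k) (l - 1)))
      (ext_m p2 (Ws k l) (Ws (k - 1) l)) (ext_m p1 (Ws k l) (Ws (k - 1) l))
      (ext_v p3 (zs k l) (zs (k - 1) l)) (ext_v p3 (bs k l) (bs (k - 1) l))
      ?a (zs k l) (bs k l) (th (Suc k) l) (Ws (Suc k) l)
    \<or> W_step \<rho> (\<Omega> l) (n l) (n (l - 1)) ?a (Ws k l) (Ws k l) (zs k l) (bs k l)
      ?a (zs k l) (bs k l) (th (Suc k) l) (Ws (Suc k) l)"
    using conjunct2[OF tiam[unfolded tiam_def], rule_format, of l k, OF l]
    unfolding Let_def by blast
  then show ?thesis
  proof
    assume safeguard: "W_step \<rho> (\<Omega> l) (n l) (n (l - 1)) ?a (Ws k l) (Ws k l) (zs k l) (bs k l)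
      ?a (zs k l) (bs k l) (th (Suc k) l) (Ws (Suc k) l)"
    note carriers = wf_state_layer_carriers[OF tiam_wf_state[OF tiam] x l]
    show ?thesis
      by (rule bexI[of _ 0], unfold mult_zero_left ext_m_zero[OF carriers(1,1)]
          ext_v_zero[OF carriers(2,2)] ext_v_zero[OF carriers(3,3)] ext_v_zero[OF carriers(4,4)])
        (rule safeguard, simp)
  qed (intro bexI[of _ 1], simp_all)
qed

lemma W_step_limiting_subgradient:
  assumes step: "W_step \<rho> \<Omega>l r c aa Wh Wt zz bb aT zT bT \<theta> X"
    and conv: "convex_on_mat r c \<Omega>l" and "0 \<le> \<rho>"
    and aa: "aa \<in> carrier_vec c" and Wt: "Wt \<in> carrier_mat r c" and bb: "bb \<in> carrier_vec r"
    and a: "a \<in> carrier_vec c" and z: "z \<in> carrier_vec r" and b: "b \<in> carrier_vec r"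
    and f: "\<And>Y. f Y = \<Omega>l Y + phi \<rho> a Y z b + f0"
    and lip: "grad_lipschitz_on \<rho> M S" "(a, X, z, b) \<in> S" "(aa, Wh, zz, bb) \<in> S"
    and dist: "vnorm (a - aa) + vnorm (z - zz) + vnorm (b - bb) \<le> D"
      "fnorm (X - Wh) \<le> E" "fnorm (X - Wt) \<le> E"
    and C: "0 \<le> M" "M \<le> C" "M + \<theta> \<le> C"
  shows "\<exists>g\<in>limiting_subdiff_mat r c f X. fnorm g \<le> C * (D + E)"
proof -
  let ?g = "grad_W \<rho> a X z b - grad_W \<rho> aa Wh zz bb - \<theta> \<cdot>\<^sub>m (X - Wt)"
  note subgradient = W_step_subgradient[OF step conv assms(3) aa Wt bb a z b]
  have \<theta>: "0 < \<theta>" and X: "X \<in> carrier_mat r c"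
    using step by (simp_all add: W_step_def Let_def)
  have "?g \<in> frechet_subdiff_mat r c f X"
  proof (rule subgradient_in_frechet_subdiff_mat[OF subgradient(1)])
    fix Y :: "real mat"
    assume "Y \<in> carrier_mat r c"
    then show "f X + minner ?g (Y - X) \<le> f Y"
      using subgradient(2)[of Y] unfolding f by linarith
  qed
  with X have limiting: "?g \<in> limiting_subdiff_mat r c f X"
    by (rule frechet_subdiff_in_limiting_subdiff_mat)
  have "fnorm ?g
      \<le> M * (vnorm (a - aa) + fnorm (X - Wh) + vnorm (z - zz) + vnorm (b - bb)) + \<theta> * fnorm (X - Wt)"
    using subgradient(3) grad_W_diff_le_lipschitz[OF lip C(1)] by linarith
  also have "\<dots> \<le> M * (D + E) + \<theta> * E"
  proof (rule add_mono)
    have "vnorm (a - aa) + fnorm (X - Wh) + vnorm (z - zz) + vnorm (b - bb) \<le> D + E"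
      using dist(1,2) by linarith
    then show "M * (vnorm (a - aa) + fnorm (X - Wh) + vnorm (z - zz) + vnorm (b - bb)) \<le> M * (D + E)"
      using C(1) by (rule mult_left_mono)
    show "\<theta> * fnorm (X - Wt) \<le> \<theta> * E"
      using dist(3) \<theta> by (simp add: mult_left_mono)
  qed
  also have "\<dots> = M * D + (M + \<theta>) * E"
    by (simp add: algebra_simps)
  also have "\<dots> \<le> C * D + C * E"
  proof (rule add_mono)
    have "0 \<le> D"
      using dist(1) vnorm_nonneg[of "a - aa"] vnorm_nonneg[of "z - zz"] vnorm_nonneg[of "b - bb"]
      by linarith
    then show "M * D \<le> C * D"
      using C(2) by (rule mult_right_mono[rotated])
    show "(M + \<theta>) * E \<le> C * E"
      using order_trans[OF fnorm_nonneg dist(2)] C(3) by (simp add: mult_right_mono)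
  qed
  also have "\<dots> = C * (D + E)"
    by (simp add: algebra_simps)
  finally show ?thesis
    using limiting by blast
qed

lemma tiam_W_limiting_subgradient:
  assumes tiam: "tiam L n x R \<Omega> h \<rho> \<epsilon> p1 p2 p3 Ws zs as bs th xi ta"
    and x: "x \<in> carrier_vec (n 0)" and "0 \<le> \<rho>"
    and p: "0 \<le> p1" "p1 \<le> 1" "0 \<le> p2" "p2 \<le> 1" "0 \<le> p3" "p3 \<le> 1"
    and l: "l \<in> {1..L}" and conv: "convex_on_mat (n l) (n (l - 1)) (\<Omega> l)"
    and lip: "grad_lipschitz_on \<rho> M S" and pts: "layer_iterates p1 p2 p3 x Ws zs as bs l \<subseteq> S"
    and C: "0 \<le> M" "M \<le> C" "M + th (Suc k) l \<le> C"
  shows "\<exists>g\<in>limiting_subdiff_mat (n l) (n (l - 1))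
      (\<lambda>V. Fobj L x \<rho> R \<Omega> ((Ws (Suc k))(l := V)) (zs (Suc k)) (as (Suc k)) (bs (Suc k)))
      (Ws (Suc k) l).
    fnorm g \<le> C * layer_displacement x Ws zs as bs k l"
proof -
  let ?a' = "act x (as (Suc k)) (l - 1)" and ?a0 = "act x (as k) (l - 1)"
  define abar Wh Wt zz bb where "abar q = ext_v (q * p3) ?a' ?a0"
    and "Wh q = ext_m (q * p2) (Ws k l) (Ws (k - 1) l)" and "Wt q = ext_m (q * p1) (Ws k l) (Ws (k - 1) l)"
    and "zz q = ext_v (q * p3) (zs k l) (zs (k - 1) l)" and "bb q = ext_v (q * p3) (bs k l) (bs (k - 1) l)"
    for q
  obtain q where q: "q \<in> {0, 1}" and step: "W_step \<rho> (\<Omega> l) (n l) (n (l - 1))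
      (abar q) (Wh q) (Wt q) (zz q) (bb q) ?a' (zs k l) (bs k l) (th (Suc k) l) (Ws (Suc k) l)"
    using tiam_W_step[OF tiam x l, of k] unfolding abar_def Wh_def Wt_def zz_def bb_def
    by blast
  note carriers = wf_state_layer_carriers[OF tiam_wf_state[OF tiam] x l]
  have qp: "0 \<le> q * p" "q * p \<le> 1" if "0 \<le> p" "p \<le> 1" for p
    using q that by auto
  have a': "?a' \<in> carrier_vec (n (l - 1))" and a0: "?a0 \<in> carrier_vec (n (l - 1))"
    using carriers(4) by simp_all
  have abar: "abar q \<in> carrier_vec (n (l - 1))" and Wt: "Wt q \<in> carrier_mat (n l) (n (l - 1))"
    and bb: "bb q \<in> carrier_vec (n l)"
    unfolding abar_def Wt_def bb_def using a' a0 carriers by (auto intro: ext_v_carrier ext_m_carrier)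
  have S: "(?a', Ws (Suc k) l, zs (Suc k) l, bs (Suc k) l) \<in> S" "(abar q, Wh q, zz q, bb q) \<in> S"
    using pts iterate_in_layer_iterates tiam_extrapolation_in_layer_iterates[OF tiam x l q]
    unfolding abar_def Wh_def zz_def bb_def by blast+
  have "vnorm (?a' - abar q) \<le> vnorm (?a' - ?a0)"
    using vnorm_diff_ext_v_le[OF a' a' a0 qp[OF p(5,6)]] by (simp add: abar_def)
  moreover have "vnorm (zs (Suc k) l - zz q) \<le> vnorm (zs (Suc k) l - zs k l) + vnorm (zs k l - zs (k - 1) l)"
    unfolding zz_def by (rule vnorm_diff_ext_v_le[OF carriers(2,2,2) qp[OF p(5,6)]])
  moreover have "vnorm (bs (Suc k) l - bb q) \<le> vnorm (bs (Suc k) l - bs k l) + vnorm (bs k l - bs (k - 1) l)"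
    unfolding bb_def by (rule vnorm_diff_ext_v_le[OF carriers(3,3,3) qp[OF p(5,6)]])
  ultimately have dist_azb: "vnorm (?a' - abar q) + vnorm (zs (Suc k) l - zz q) + vnorm (bs (Suc k) l - bb q)
      \<le> vnorm (?a' - ?a0) + (vnorm (zs (Suc k) l - zs k l) + vnorm (zs k l - zs (k - 1) l))
        + (vnorm (bs (Suc k) l - bs k l) + vnorm (bs k l - bs (k - 1) l))"
    by linarith
  have "fnorm (Ws (Suc k) l - Wh q) \<le> fnorm (Ws (Suc k) l - Ws k l) + fnorm (Ws k l - Ws (k - 1) l)"
    "fnorm (Ws (Suc k) l - Wt q) \<le> fnorm (Ws (Suc k) l - Ws k l) + fnorm (Ws k l - Ws (k - 1) l)"
    unfolding Wh_def Wt_def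
    by (rule fnorm_diff_ext_m_le[OF carriers(1,1,1) qp[OF p(3,4)]]
        fnorm_diff_ext_m_le[OF carriers(1,1,1) qp[OF p(1,2)]])+
  from W_step_limiting_subgradient[OF step conv assms(3) abar Wt bb a' carriers(2,3)
      Fobj_fun_upd_W[OF l, where \<Omega> = \<Omega> and W = "Ws (Suc k)" and z = "zs (Suc k)"
        and a = "as (Suc k)" and b = "bs (Suc k)"] lip S dist_azb this C]
  show ?thesis
    unfolding layer_displacement_def by (simp add: algebra_simps)
qed

lemma L2_set_sum_list_le: "L2_set (\<lambda>i. \<Sum>f\<leftarrow>fs. f i) A \<le> (\<Sum>f\<leftarrow>fs. L2_set f A)"
proof (induction fs)
  case (Cons f fs)
  then show ?case
    using L2_set_triangle_ineq[of f "\<lambda>i. \<Sum>f\<leftarrow>fs. f i" A] by simp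
qed (simp add: L2_set_0')

(* a_0 = x is not an iterate, so the first layer contributes nothing to the a-block. *)
lemma L2_set_act_diff:
  assumes "1 \<le> L"
  shows "L2_set (\<lambda>l. vnorm (act x a (l - 1) - act x a' (l - 1))) {1..L} = normVs 1 (L - 1) (\<lambda>l. a l - a' l)"
proof -
  obtain L' where L: "L = Suc L'"
    using assms by (cases L) auto
  have "(\<Sum>l=1..L. (vnorm (act x a (l - 1) - act x a' (l - 1)))\<^sup>2)
      = (\<Sum>l=Suc 1..Suc L'. (vnorm (act x a (l - 1) - act x a' (l - 1)))\<^sup>2)"
    unfolding L by (subst sum.atLeast_Suc_atMost) (auto simp: act_def)
  also have "\<dots> = (\<Sum>l=1..L'. (vnorm (a l - a' l))\<^sup>2)"
    unfolding sum.shift_bounds_cl_Suc_ivl by (simp add: act_def)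
  finally show ?thesis
    unfolding L2_set_def normVs_def L by simp
qed

lemma subgradient_norms_le_displacement:
  assumes "1 \<le> L" "0 \<le> C"
    and "\<And>l. l \<in> {1..L} \<Longrightarrow> fnorm (g l) \<le> C * layer_displacement x Ws zs as bs k l"
  shows "sqrt (\<Sum>l=1..L. (fnorm (g l))\<^sup>2)
    \<le> C * (normWs L (\<lambda>l. Ws (Suc k) l - Ws k l) + normVs 1 L (\<lambda>l. zs (Suc k) l - zs k l)
      + normVs 1 (L - 1) (\<lambda>l. as (Suc k) l - as k l) + normVs 1 L (\<lambda>l. bs (Suc k) l - bs k l)
      + normWs L (\<lambda>l. Ws k l - Ws (k - 1) l) + normVs 1 L (\<lambda>l. bs k l - bs (k - 1) l)
      + normVs 1 L (\<lambda>l. zs k l - zs (k - 1) l))"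
proof -
  define ds where "ds = [\<lambda>l. fnorm (Ws (Suc k) l - Ws k l), \<lambda>l. vnorm (zs (Suc k) l - zs k l),
    \<lambda>l. vnorm (act x (as (Suc k)) (l - 1) - act x (as k) (l - 1)), \<lambda>l. vnorm (bs (Suc k) l - bs k l),
    \<lambda>l. fnorm (Ws k l - Ws (k - 1) l), \<lambda>l. vnorm (bs k l - bs (k - 1) l),
    \<lambda>l. vnorm (zs k l - zs (k - 1) l)]"
  have displacement: "layer_displacement x Ws zs as bs k l = (\<Sum>d\<leftarrow>ds. d l)" for l
    by (simp add: layer_displacement_def ds_def add.assoc)
  have "sqrt (\<Sum>l=1..L. (fnorm (g l))\<^sup>2) = L2_set (\<lambda>l. fnorm (g l)) {1..L}"
    by (simp add: L2_set_def)
  also have "\<dots> \<le> L2_set (\<lambda>l. C * (\<Sum>d\<leftarrow>ds. d l)) {1..L}"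
    using assms(3) by (intro L2_set_mono) (auto simp: displacement)
  also have "\<dots> = C * L2_set (\<lambda>l. \<Sum>d\<leftarrow>ds. d l) {1..L}"
    using assms(2) by (simp add: L2_set_right_distrib)
  also have "\<dots> \<le> C * (\<Sum>d\<leftarrow>ds. L2_set d {1..L})"
    using assms(2) by (intro mult_left_mono L2_set_sum_list_le)
  also have "(\<Sum>d\<leftarrow>ds. L2_set d {1..L})
      = normWs L (\<lambda>l. Ws (Suc k) l - Ws k l) + normVs 1 L (\<lambda>l. zs (Suc k) l - zs k l)
        + normVs 1 (L - 1) (\<lambda>l. as (Suc k) l - as k l) + normVs 1 L (\<lambda>l. bs (Suc k) l - bs k l)
        + normWs L (\<lambda>l. Ws k l - Ws (k - 1) l) + normVs 1 L (\<lambda>l. bs k l - bs (k - 1) l)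
        + normVs 1 L (\<lambda>l. zs k l - zs (k - 1) l)"
    using L2_set_act_diff[OF assms(1)] by (simp add: ds_def normWs_def normVs_def L2_set_def add.assoc)
  finally show ?thesis .
qed

theorem lemma4:
  fixes L :: nat and n :: "nat \<Rightarrow> nat" and x :: "real vec"
    and R :: "real vec \<Rightarrow> real" and \<Omega> :: "nat \<Rightarrow> real mat \<Rightarrow> real"
    and h :: "nat \<Rightarrow> real \<Rightarrow> real"
    and \<rho> \<epsilon> p1 p2 p3 M :: real
    and Ws :: "nat \<Rightarrow> nat \<Rightarrow> real mat" and zs as bs :: "nat \<Rightarrow> nat \<Rightarrow> real vec"
    and th xi ta :: "nat \<Rightarrow> nat \<Rightarrow> real"
    and k :: nat
  assumes "L \<ge> 1"
    and "x \<in> carrier_vec (n 0)"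
    and "\<rho> > 0" and "\<epsilon> > 0"
    and "0 \<le> p1" "p1 < 1" "0 \<le> p2" "p2 < 1" "0 \<le> p3" "p3 < 1"
    and "\<forall>l\<in>{1..L-1}. continuous_on UNIV (h l)"
    and "convex_on_vec (n L) R" and "cont_on_vec (n L) R"
    and "\<forall>l\<in>{1..L}. convex_on_mat (n l) (n (l - 1)) (\<Omega> l) \<and> cont_on_mat (n l) (n (l - 1)) (\<Omega> l)
                     \<and> (\<forall>V\<in>carrier_mat (n l) (n (l - 1)). \<Omega> l V \<ge> 0)"
    and "coercive_on_feasible L n h \<epsilon> (Fobj L x \<rho> R \<Omega>)"
    and "tiam L n x R \<Omega> h \<rho> \<epsilon> p1 p2 p3 Ws zs as bs th xi ta"
    and "M > 0"
    and "\<forall>l\<in>{1..L}. \<exists>S. bounded_tup S \<and> grad_lipschitz_on \<rho> M S \<and>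
           {(a, W, z, b) | a W z b.
              a \<in> pts_v p1 p2 p3 (\<lambda>j. act x (as j) (l - 1)) \<and> W \<in> pts_m p1 p2 p3 (\<lambda>j. Ws j l)
              \<and> z \<in> pts_v p1 p2 p3 (\<lambda>j. zs j l) \<and> b \<in> pts_v p1 p2 p3 (\<lambda>j. bs j l)} \<subseteq> S"
  shows "\<exists>g :: nat \<Rightarrow> real mat.
           (\<forall>l\<in>{1..L}. g l \<in> limiting_subdiff_mat (n l) (n (l - 1))
               (\<lambda>V. Fobj L x \<rho> R \<Omega> ((Ws (Suc k))(l := V)) (zs (Suc k)) (as (Suc k)) (bs (Suc k)))
               (Ws (Suc k) l))
         \<and> sqrt (\<Sum>l=1..L. (fnorm (g l))\<^sup>2)
             \<le> Max ({M} \<union> (\<lambda>l. M + th (Suc k) l) ` {1..L}) *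
               ( normWs L (\<lambda>l. Ws (Suc k) l - Ws k l)
               + normVs 1 L (\<lambda>l. zs (Suc k) l - zs k l)
               + normVs 1 (L - 1) (\<lambda>l. as (Suc k) l - as k l)
               + normVs 1 L (\<lambda>l. bs (Suc k) l - bs k l)
               + normWs L (\<lambda>l. Ws k l - Ws (k - 1) l)
               + normVs 1 L (\<lambda>l. bs k l - bs (k - 1) l)
               + normVs 1 L (\<lambda>l. zs k l - zs (k - 1) l))"
  proof -
  define C where "C = Max ({M} \<union> (\<lambda>l. M + th (Suc k) l) ` {1..L})"
  have C_M: "M \<le> C"
    unfolding C_def by (rule Max_ge) auto
  have C_th: "M + th (Suc k) l \<le> C" if "l \<in> {1..L}" for l
    unfolding C_def by (rule Max_ge) (use that in auto)
  have "\<forall>l\<in>{1..L}. \<exists>g\<in>limiting_subdiff_mat (n l) (n (l - 1))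
      (\<lambda>V. Fobj L x \<rho> R \<Omega> ((Ws (Suc k))(l := V)) (zs (Suc k)) (as (Suc k)) (bs (Suc k)))
      (Ws (Suc k) l). fnorm g \<le> C * layer_displacement x Ws zs as bs k l"
    (is "\<forall>l\<in>_. \<exists>g\<in>?G l. ?small l g")
  proof
    fix l assume l: "l \<in> {1..L}"
    then obtain S where "grad_lipschitz_on \<rho> M S" "layer_iterates p1 p2 p3 x Ws zs as bs l \<subseteq> S"
      using assms(18) unfolding layer_iterates_def by blast
    with l show "\<exists>g\<in>?G l. ?small l g"
      using assms(3,5-10,14,17) C_M C_th[OF l]
      by (intro tiam_W_limiting_subgradient[OF assms(16,2)]) auto
  qed
  then obtain g where g: "\<forall>l\<in>{1..L}. g l \<in> ?G l \<and> ?small l (g l)"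
    by metis
  moreover have "0 \<le> C"
    using C_M assms(17) by linarith
  ultimately show ?thesis
    unfolding C_def[symmetric] using subgradient_norms_le_displacement[OF assms(1)] by blast
qed

end
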